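(* Let $f$ and $g$ be multiplicative functions on $W_{\infty\infty}$ (with values in a commutative ring containing $\mathbf{Q}$, e.g. $\mathbf{C}$), and let $F(x,y)=\sum_{i,j\ge0}f_{ij}x^iy^j$, $G(x,y)=\sum_{i,j\ge0}g_{ij}x^iy^j$, $(F*G)(x,y)=\sum_{i,j\ge0}(f*g)_{ij}x^iy^j$ as formal power series. Let $F_0=F(x,0)$, $G_0=G(0,y)$, $\tilde F(x,y)=F(x,G_0\,y)$ and $\tilde G(x,y)=G(F_0\,x,y)$. Then $$\frac{1}{F*G}=\frac{1}{\tilde F\,G_0}+\frac{1}{F_0\,\tilde G}-\frac{1}{F_0\,G_0}.$$
   Context: $W_{\infty\infty}$ is the poset of shuffles over the infinite alphabets $\mathcal{A}_\infty=\{a_1,a_2,\dots\}$ and $\mathcal{X}_\infty=\{x_1,x_2,\dots\}$: its elements are finite words (possibly empty) with distinct letters from $\mathcal{A}_\infty\cup\mathcal{X}_\infty$ in which the letters of each alphabet occur in increasing order of subscripts, ordered by the reflexive-transitive closure of: $w\lessdot w'$ iff $w'$ is obtained from $w$ by deleting a letter of $\mathcal{A}_\infty$ or inserting a letter of $\mathcal{X}_\infty$. For finite $i,j$, $W_{ij}$ is the analogous poset over $\{a_1,\dots,a_i\}$ and $\{x_1,\dots,x_j\}$. Canonical isomorphism type of an interval $[u,v]$: write $u=u_1\cdots u_r$, $v=v_1\cdots v_s$, let $u_{i_1}\cdots u_{i_t}$ and $v_{j_1}\cdots v_{j_t}$ (increasing indices) be the subwords formed by the letters common to $u$ and $v$;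 with $i_0=j_0=0$, $i_{t+1}=r+1$, $j_{t+1}=s+1$, the canonical type is $\prod_{p=1}^{t+1}W_{i_p-i_{p-1}-1,\,j_p-j_{p-1}-1}=\prod_{i,j}W_{ij}^{c_{ij}}$. A multiplicative function is a function $f$ on intervals of $W_{\infty\infty}$ with values $f_{ij}$ ($i,j\ge0$), $f_{00}=1$, such that $f(u,v)=\prod_{i,j}f_{ij}^{c_{ij}}$ whenever $[u,v]$ has canonical type $\prod W_{ij}^{c_{ij}}$. The convolution is $(f*g)(u,v)=\sum_{u\le w\le v}f(u,w)g(w,v)$, and $(f*g)_{ij}$ denotes its value on an interval of canonical type $W_{ij}$, e.g. $[a_1\cdots a_i,\ x_1\cdots x_j]$. *)

theory Defs
  imports Main "HOL-Computational_Algebra.Formal_Power_Series"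
begin

text \<open>Letters: A i stands for a_i, X j stands for x_j (subscripts are positive).\<close>
datatype letter = A nat | X nat

type_synonym word = "letter list"

definition a_subs :: "word \<Rightarrow> nat list" where
  "a_subs w = concat (map (\<lambda>l. case l of A i \<Rightarrow> [i] | X _ \<Rightarrow> []) w)"

definition x_subs :: "word \<Rightarrow> nat list" where
  "x_subs w = concat (map (\<lambda>l. case l of A _ \<Rightarrow> [] | X j \<Rightarrow> [j]) w)"

definition valid_word :: "word \<Rightarrow> bool" where
  "valid_word w \<longleftrightarrow> distinct w \<and> sorted (a_subs w) \<and> sorted (x_subs w)
      \<and> (\<forall>i \<in> set (a_subs w). i \<ge> 1) \<and> (\<forall>j \<in> set (x_subs w). j \<ge> 1)"

definition wcover :: "word \<Rightarrow> word \<Rightarrow> bool" where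
  "wcover u v \<longleftrightarrow> valid_word u \<and> valid_word v \<and>
     ((\<exists>p q i. u = p @ A i # q \<and> v = p @ q) \<or> (\<exists>p q j. u = p @ q \<and> v = p @ X j # q))"

definition wle :: "word \<Rightarrow> word \<Rightarrow> bool" where
  "wle = wcover\<^sup>*\<^sup>*"

text \<open>gaps P w: the numbers of letters not satisfying P before the first letter satisfying P,
  between consecutive such letters, and after the last one (a list of length t+1).\<close>
fun gaps :: "(letter \<Rightarrow> bool) \<Rightarrow> word \<Rightarrow> nat list" where
  "gaps P [] = [0]"
| "gaps P (l # w) = (if P l then 0 # gaps P w
                     else (case gaps P w of [] \<Rightarrow> [1] | n # ns \<Rightarrow> Suc n # ns))"

text \<open>Canonical type of [u,v]: the list of pairs (i_p - i_{p-1} - 1, j_p - j_{p-1} - 1),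
  p = 1..t+1, i.e. the interval is isomorphic to the product of the W_{ij} in the list.\<close>
definition ctype :: "word \<Rightarrow> word \<Rightarrow> (nat \<times> nat) list" where
  "ctype u v = zip (gaps (\<lambda>l. l \<in> set v) u) (gaps (\<lambda>l. l \<in> set u) v)"

text \<open>The standard interval of type W_{ij}: [a_1...a_i, x_1...x_j].\<close>
definition awd :: "nat \<Rightarrow> word" where "awd i = map A [1..<Suc i]"
definition xwd :: "nat \<Rightarrow> word" where "xwd j = map X [1..<Suc j]"

definition fval :: "(word \<Rightarrow> word \<Rightarrow> 'a) \<Rightarrow> nat \<Rightarrow> nat \<Rightarrow> 'a" where
  "fval f i j = f (awd i) (xwd j)"

definition multiplicative :: "(word \<Rightarrow> word \<Rightarrow> 'a::comm_monoid_mult) \<Rightarrow> bool" where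
  "multiplicative f \<longleftrightarrow> fval f 0 0 = 1 \<and>
     (\<forall>u v. valid_word u \<and> valid_word v \<and> wle u v \<longrightarrow>
        f u v = prod_list (map (\<lambda>(i, j). fval f i j) (ctype u v)))"

definition conv :: "(word \<Rightarrow> word \<Rightarrow> 'a::comm_semiring_1) \<Rightarrow> (word \<Rightarrow> word \<Rightarrow> 'a) \<Rightarrow> word \<Rightarrow> word \<Rightarrow> 'a" where
  "conv f g u v = (\<Sum>w \<in> {w. wle u w \<and> wle w v}. f u w * g w v)"

text \<open>A bivariate series sum c_{ij} x^i y^j is represented as an element of 'a fps fps:
  the outer variable is y, the inner variable is x.\<close>
definition gen_series :: "(nat \<Rightarrow> nat \<Rightarrow> 'a::zero) \<Rightarrow> 'a fps fps" where
  "gen_series c = Abs_fps (\<lambda>j. Abs_fps (\<lambda>i. c i j))"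

definition inv2 :: "'a::comm_ring_1 fps fps \<Rightarrow> 'a fps fps" where
  "inv2 H = (THE K. H * K = 1)"

definition at_y0 :: "'a::comm_ring_1 fps fps \<Rightarrow> 'a fps fps" where
  "at_y0 H = fps_const (fps_nth H 0)"

definition at_x0 :: "'a::comm_ring_1 fps fps \<Rightarrow> 'a fps fps" where
  "at_x0 H = Abs_fps (\<lambda>j. fps_const (fps_nth (fps_nth H j) 0))"

definition subst_y :: "'a::comm_ring_1 fps fps \<Rightarrow> 'a fps fps \<Rightarrow> 'a fps fps" where
  "subst_y H S = H oo (S * fps_X)"

definition subst_x :: "'a::comm_ring_1 fps fps \<Rightarrow> 'a fps \<Rightarrow> 'a fps fps" where
  "subst_x H S = Abs_fps (\<lambda>j. (fps_nth H j) oo (S * fps_X))"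

end

(*
  For u = a_1...a_i and v = x_1...x_j the interval [u,v] consists of the shuffles w of a subword
  of u with a subword of v, and f(u,w) g(w,v) is a product of values f_{pq}, g_{pq} indexed by the
  gaps that w leaves in u and in v. Classifying w by its first letter gives a linear recursion for
  these sums, once they are generalised by offsets c, d recording how many letters of the other
  alphabet were passed over before the first letter. Passing to generating series, the solution is
  expressed through R_c = sum_n (x F_0)^n G_{c+n}(y) and S_d = sum_n (y G_0)^n F_{d+n}(x), where
  F_d(x) and G_c(y) are the coefficients of y^d in F and of x^c in G; thus R_0 = G~ and S_0 = F~.
  With D = 1 - x y S_1 R_1 one gets (F*G) D = F~ G~, and from R_0 = G_0 + x F_0 R_1,
  S_0 = F_0 + y G_0 S_1 also F_0 G~ + G_0 F~ - F~ G~ = F_0 G_0 D. Dividing by F_0 G_0 F~ G~ gives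
  the theorem.
*)
theory Submission
  imports Defs "HOL-Library.Sublist"
begin

unbundle fps_syntax

section \<open>Bivariate power series\<close>

(* fps_compose_mult_distrib needs an integral domain, which 'a fps need not be. *)
lemma fps_compose_fps_X_mult:
  fixes a c :: "'b::comm_ring_1 fps"
  assumes c0: "c $ 0 = 0"
  shows "(fps_X * a) oo c = c * (a oo c)"
proof (rule fps_ext)
  fix n
  have vanish: "(c ^ i) $ m = 0" if "m < i" for i m
    using startsby_zero_power_prefix[OF c0] that by blast
  have trunc: "(a oo c) $ m = (\<Sum>i=0..n. a $ i * (c ^ i) $ m)" if "m \<le> n" for m
    unfolding fps_compose_nth by (rule sum.mono_neutral_left) (use that vanish in auto)
  have "(c * (a oo c)) $ n = (\<Sum>k=0..n. \<Sum>i=0..n. a $ i * (c $ k * (c ^ i) $ (n - k)))"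
    unfolding fps_mult_nth by (simp add: trunc sum_distrib_left mult.left_commute)
  also have "\<dots> = (\<Sum>i=0..n. a $ i * (c ^ Suc i) $ n)"
    by (subst sum.swap) (simp add: fps_mult_nth sum_distrib_left)
  also have "\<dots> = (\<Sum>i=0..Suc n. (fps_X * a) $ i * (c ^ i) $ n)"
    by (simp add: sum.atLeast0_atMost_Suc_shift del: sum.cl_ivl_Suc)
  also have "\<dots> = ((fps_X * a) oo c) $ n"
    using vanish[of n "Suc n"] by (simp add: fps_compose_nth)
  finally show "((fps_X * a) oo c) $ n = (c * (a oo c)) $ n" ..
qed

lemma fps_compose_rec:
  fixes a c :: "'b::comm_ring_1 fps"
  assumes "c $ 0 = 0"
  shows "a oo c = fps_const (a $ 0) + c * (fps_shift 1 a oo c)"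
proof -
  have "a = fps_const (a $ 0) + fps_X * fps_shift 1 a"
    by (rule fps_ext) (simp add: fps_X_mult_nth)
  then have "a oo c = (fps_const (a $ 0) + fps_X * fps_shift 1 a) oo c" by simp
  then show ?thesis by (simp add: fps_compose_add_distrib fps_compose_fps_X_mult[OF assms])
qed

lemma gen_series_nth [simp]: "gen_series c $ j $ i = c i j"
  by (simp add: gen_series_def)

definition row_series :: "(nat \<Rightarrow> nat \<Rightarrow> 'a::comm_ring_1) \<Rightarrow> nat \<Rightarrow> 'a fps fps" where
  "row_series g c = Abs_fps (\<lambda>j. fps_const (g c j))"

lemma at_x0_gen_series: "at_x0 (gen_series g) = row_series g 0"
  by (rule fps_ext) (simp add: at_x0_def row_series_def)

definition tail_subst_x ::
    "(nat \<Rightarrow> nat \<Rightarrow> 'a::comm_ring_1) \<Rightarrow> 'a fps \<Rightarrow> nat \<Rightarrow> 'a fps fps" where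
  "tail_subst_x g s c = subst_x (gen_series (\<lambda>i. g (i + c))) s"

definition tail_subst_y :: "'a::comm_ring_1 fps fps \<Rightarrow> 'a fps fps \<Rightarrow> nat \<Rightarrow> 'a fps fps" where
  "tail_subst_y H S d = subst_y (fps_shift d H) S"

lemma tail_subst_x_rec:
  "tail_subst_x g s c = row_series g c + fps_const (fps_X * s) * tail_subst_x g s (Suc c)"
proof (rule fps_ext)
  fix j
  have "fps_shift (Suc 0) (Abs_fps (\<lambda>i. g (i + c) j)) = Abs_fps (\<lambda>i. g (Suc (i + c)) j)"
    by (rule fps_ext) simp
  then show "tail_subst_x g s c $ j
      = (row_series g c + fps_const (fps_X * s) * tail_subst_x g s (Suc c)) $ j"
    unfolding tail_subst_x_def subst_x_def gen_series_def row_series_def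
    by (subst fps_compose_rec) (simp_all add: mult_ac)
qed

lemma tail_subst_y_rec:
  "tail_subst_y H S d = fps_const (H $ d) + fps_X * S * tail_subst_y H S (Suc d)"
  unfolding tail_subst_y_def subst_y_def
  by (subst fps_compose_rec) (simp_all add: mult_ac flip: fps_shift_fps_shift)

lemma row_series_mult_nth: "(fps_const p * row_series g c) $ j $ i = p $ i * g c j"
  by (simp add: row_series_def)

lemma x_mult_nth:
  fixes p :: "'a::comm_ring_1 fps"
  shows "(fps_const (fps_X * p) * Z) $ j $ i = (\<Sum>k<i. p $ k * Z $ j $ (i - Suc k))"
proof (cases i)
  case (Suc m)
  have "(fps_const (fps_X * p) * Z) $ j $ i = (fps_X * (p * Z $ j)) $ i"
    by (simp add: mult.assoc)
  also have "\<dots> = (p * Z $ j) $ m"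
    using Suc by simp
  also have "\<dots> = (\<Sum>k<i. p $ k * Z $ j $ (i - Suc k))"
    unfolding fps_mult_nth using Suc by (intro sum.reindex_bij_witness[of _ id id]) auto
  finally show ?thesis .
qed simp

lemma y_mult_nth:
  "(fps_X * row_series g c * Z) $ j $ i = (\<Sum>k<j. g c k * Z $ (j - Suc k) $ i)"
proof (cases j)
  case (Suc m)
  have "(fps_X * row_series g c * Z) $ j $ i = (row_series g c * Z) $ m $ i"
    using Suc by (simp add: mult.assoc)
  also have "\<dots> = (\<Sum>k<j. g c k * Z $ (j - Suc k) $ i)"
    unfolding fps_mult_nth[of "row_series g c"] fps_sum_nth using Suc
    by (intro sum.reindex_bij_witness[of _ id id]) (auto simp: row_series_def)
  finally show ?thesis .
qed simp

lemma inv2_unique: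
  fixes H :: "'a::comm_ring_1 fps fps"
  assumes "H * K = 1"
  shows "inv2 H = K"
  unfolding inv2_def
proof (rule the_equality)
  fix K' assume K': "H * K' = 1"
  have "K = (H * K') * K" using K' by simp
  also have "\<dots> = (H * K) * K'" by (simp add: mult_ac)
  finally show "K' = K" using assms by simp
qed fact

lemma inv2_right_inverse:
  fixes H :: "'a::comm_ring_1 fps fps"
  assumes "H $ 0 $ 0 = 1"
  shows "H * inv2 H = 1"
proof -
  have "H $ 0 * fps_right_inverse (H $ 0) 1 = 1"
    by (rule fps_right_inverse) (simp add: assms)
  then have "H * fps_right_inverse H (fps_right_inverse (H $ 0) 1) = 1"
    by (rule fps_right_inverse)
  then show ?thesis by (simp add: inv2_unique)
qed

lemma inv2_mult:
  fixes H K :: "'a::comm_ring_1 fps fps"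
  assumes "H $ 0 $ 0 = 1" "K $ 0 $ 0 = 1"
  shows "inv2 (H * K) = inv2 H * inv2 K"
proof (rule inv2_unique)
  show "H * K * (inv2 H * inv2 K) = 1"
    using inv2_right_inverse[OF assms(1)] inv2_right_inverse[OF assms(2)]
    by (metis mult.left_commute mult.assoc mult_1_right)
qed

lemma unit_fraction_identity:
  fixes a b p q d a' b' p' q' :: "'a::comm_ring_1"
  assumes "a * a' = 1" "b * b' = 1" "p * p' = 1" "q * q' = 1"
    and "a * p + b * q - a * b = p * q * d"
  shows "d * a' * b' = b' * q' + p' * a' - p' * q'"
proof -
  have "d * a' * b' = (p * p') * (q * q') * d * a' * b'" using assms(3,4) by simp
  also have "\<dots> = (a * p + b * q - a * b) * p' * q' * a' * b'"
    by (simp add: assms(5) mult_ac)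
  also have "\<dots> = (a * a') * (p * p') * q' * b' + (b * b') * (q * q') * p' * a'
                      - (a * a') * (b * b') * p' * q'"
    by (simp add: algebra_simps)
  also have "\<dots> = b' * q' + p' * a' - p' * q'" using assms(1-4) by (simp add: mult_ac)
  finally show ?thesis .
qed

lemma inv2_partial_fractions:
  fixes L D a b p q :: "'a::comm_ring_1 fps fps"
  assumes "a $ 0 $ 0 = 1" "b $ 0 $ 0 = 1" "p $ 0 $ 0 = 1" "q $ 0 $ 0 = 1"
    and L_D: "L * D = a * b" and "a * p + b * q - a * b = p * q * D"
  shows "inv2 L = inv2 (b * q) + inv2 (p * a) - inv2 (p * q)"
proof -
  note inverses = assms(1-4)[THEN inv2_right_inverse]
  have "L * (D * inv2 a * inv2 b) = (L * D) * inv2 a * inv2 b"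
    by (simp add: mult_ac)
  also have "\<dots> = (a * inv2 a) * (b * inv2 b)"
    unfolding L_D by (simp add: mult_ac)
  finally have "inv2 L = D * inv2 a * inv2 b"
    using inverses(1,2) by (intro inv2_unique) simp
  also have "\<dots> = inv2 b * inv2 q + inv2 p * inv2 a - inv2 p * inv2 q"
    using inverses assms(6) by (rule unit_fraction_identity)
  finally show ?thesis
    using assms(1-4) by (simp add: inv2_mult)
qed

section \<open>Intervals of the shuffle poset\<close>

primrec isA :: "letter \<Rightarrow> bool" where
  "isA (A i) = True"
| "isA (X j) = False"

lemma a_subs_simps [simp]:
  "a_subs [] = []" "a_subs (A i # w) = i # a_subs w" "a_subs (X j # w) = a_subs w"
  "a_subs (u @ w) = a_subs u @ a_subs w"
  by (simp_all add: a_subs_def)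

lemma x_subs_simps [simp]:
  "x_subs [] = []" "x_subs (A i # w) = x_subs w" "x_subs (X j # w) = j # x_subs w"
  "x_subs (u @ w) = x_subs u @ x_subs w"
  by (simp_all add: x_subs_def)

lemma subs_map [simp]:
  "a_subs (map A ns) = ns" "x_subs (map A ns) = []"
  "a_subs (map X ns) = []" "x_subs (map X ns) = ns"
  by (induct ns) auto

lemma filter_isA: "filter isA w = map A (a_subs w)"
proof (induct w)
  case (Cons l w) then show ?case by (cases l) auto
qed simp

lemma filter_not_isA: "filter (\<lambda>l. \<not> isA l) w = map X (x_subs w)"
proof (induct w)
  case (Cons l w) then show ?case by (cases l) auto
qed simp

lemma A_in_set_iff: "A i \<in> set w \<longleftrightarrow> i \<in> set (a_subs w)"
proof (induct w)
  case (Cons l w) then show ?case by (cases l) auto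
qed simp

lemma X_in_set_iff: "X j \<in> set w \<longleftrightarrow> j \<in> set (x_subs w)"
proof (induct w)
  case (Cons l w) then show ?case by (cases l) auto
qed simp

lemma distinct_iff_distinct_subs: "distinct w \<longleftrightarrow> distinct (a_subs w) \<and> distinct (x_subs w)"
proof (induct w)
  case (Cons l w) then show ?case by (cases l) (auto simp: A_in_set_iff X_in_set_iff)
qed simp

lemma subseq_subs: "subseq s w \<Longrightarrow> subseq (a_subs s) (a_subs w) \<and> subseq (x_subs s) (x_subs w)"
proof (induct rule: list_emb.induct)
  case (list_emb_Cons xs ys y) then show ?case by (cases y) auto
next
  case (list_emb_Cons2 x y xs ys) then show ?case by (cases x) auto
qed simp

lemma subseq_sorted: "subseq xs ys \<Longrightarrow> sorted ys \<Longrightarrow> sorted xs"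
  by (metis sorted_nths subseq_conv_nths)

lemma subseq_distinct: "subseq xs ys \<Longrightarrow> distinct ys \<Longrightarrow> distinct xs"
  by (metis distinct_nthsI subseq_conv_nths)

lemma subseq_set: "subseq xs ys \<Longrightarrow> set xs \<subseteq> set ys"
  by (metis set_nths_subset subseq_conv_nths)

lemma subseq_delete: "subseq (p @ q) (p @ l # q)"
  unfolding subseq_append' by (rule list_emb_Cons) simp

lemma subseq_delete_notin: "subseq s (p @ l # q) \<Longrightarrow> l \<notin> set s \<Longrightarrow> subseq s (p @ q)"
proof -
  assume sub: "subseq s (p @ l # q)" and l: "l \<notin> set s"
  obtain s1 s2 where s: "s = s1 @ s2" and "subseq s1 p" and s2: "subseq s2 (l # q)"
    using sub by (auto simp: subseq_append_iff)
  moreover have "subseq s2 q" using s2 l s by (cases s2) auto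
  ultimately show ?thesis by (simp add: list_emb_append_mono)
qed

lemma subseq_eq_if_set_subset:
  "subseq s w \<Longrightarrow> set w \<subseteq> set s \<Longrightarrow> distinct w \<Longrightarrow> s = w"
  by (metis card_mono distinct_card le_antisym list_emb_length subseq_distinct
      subseq_same_length finite_set)

lemma rtranclp_subseq_insertions:
  assumes "subseq s w" "distinct w"
    and "\<And>p l q. subseq s (p @ q) \<Longrightarrow> subseq (p @ l # q) w \<Longrightarrow> l \<in> set w - set s
           \<Longrightarrow> R (p @ q) (p @ l # q)"
  shows "R\<^sup>*\<^sup>* s w"
  using assms
proof (induction "length w" arbitrary: w rule: less_induct)
  case less
  show ?case
  proof (cases "set w \<subseteq> set s")
    case True
    have "s = w" by (rule subseq_eq_if_set_subset[OF less.prems(1) True less.prems(2)])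
    then show ?thesis by simp
  next
    case False
    then obtain l where l: "l \<in> set w" "l \<notin> set s" by blast
    then obtain p q where w: "w = p @ l # q" by (meson split_list)
    have pq: "subseq (p @ q) w" unfolding w by (rule subseq_delete)
    have s_pq: "subseq s (p @ q)" using less.prems(1) l(2) unfolding w by (rule subseq_delete_notin)
    have "R\<^sup>*\<^sup>* s (p @ q)"
    proof (rule less.hyps)
      show "distinct (p @ q)" using pq less.prems(2) by (rule subseq_distinct)
      fix p' l' q' assume s': "subseq s (p' @ q')" and pq': "subseq (p' @ l' # q') (p @ q)"
        and l': "l' \<in> set (p @ q) - set s"
      have "l' \<in> set w - set s" using l' subseq_set[OF pq] by blast
      with s' subseq_order.trans[OF pq' pq] show "R (p' @ q') (p' @ l' # q')"
        by (rule less.prems(3))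
    qed (use w s_pq in auto)
    moreover have "R (p @ q) w"
      unfolding w by (rule less.prems(3)[OF s_pq]) (use l w in auto)
    ultimately show ?thesis by (rule rtranclp.rtrancl_into_rtrancl)
  qed
qed

lemma valid_word_subs_mono:
  assumes "valid_word w" and a: "subseq (a_subs s) (a_subs w)" and x: "subseq (x_subs s) (x_subs w)"
  shows "valid_word s"
proof -
  have "distinct (a_subs s)" "sorted (a_subs s)" "distinct (x_subs s)" "sorted (x_subs s)"
    using assms subseq_distinct subseq_sorted
    unfolding valid_word_def distinct_iff_distinct_subs by blast+
  moreover have "set (a_subs s) \<subseteq> set (a_subs w)" "set (x_subs s) \<subseteq> set (x_subs w)"
    using subseq_set a x by blast+
  ultimately show ?thesis
    using assms(1) unfolding valid_word_def distinct_iff_distinct_subs by blast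
qed

lemma valid_subseq: "valid_word w \<Longrightarrow> subseq s w \<Longrightarrow> valid_word s"
  using subseq_subs valid_word_subs_mono by blast

lemma wcover_delete:
  assumes "valid_word (p @ l # q)" "isA l"
  shows "wcover (p @ l # q) (p @ q)"
proof -
  obtain i where "l = A i" using assms(2) by (cases l) auto
  then show ?thesis
    using assms(1) valid_subseq[OF assms(1) subseq_delete] unfolding wcover_def by blast
qed

lemma wcover_insert:
  assumes "valid_word (p @ l # q)" "\<not> isA l"
  shows "wcover (p @ q) (p @ l # q)"
proof -
  obtain j where "l = X j" using assms(2) by (cases l) auto
  then show ?thesis
    using assms(1) valid_subseq[OF assms(1) subseq_delete] unfolding wcover_def by blast
qed

lemma wle_insertions:
  assumes "valid_word w" "subseq s w" "\<forall>l\<in>set w - set s. \<not> isA l"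
  shows "wle s w"
  unfolding wle_def
proof (rule rtranclp_subseq_insertions)
  show "distinct w" using assms(1) by (simp add: valid_word_def)
  fix p l q assume "subseq (p @ l # q) w" "l \<in> set w - set s"
  then show "wcover (p @ q) (p @ l # q)"
    using assms(1,3) valid_subseq by (intro wcover_insert) auto
qed fact

lemma wle_deletions:
  assumes "valid_word u" "subseq s u" "\<forall>l\<in>set u - set s. isA l"
  shows "wle u s"
proof -
  have "wcover\<inverse>\<inverse>\<^sup>*\<^sup>* s u"
  proof (rule rtranclp_subseq_insertions)
    show "distinct u" using assms(1) by (simp add: valid_word_def)
    fix p l q assume "subseq (p @ l # q) u" "l \<in> set u - set s"
    then show "wcover\<inverse>\<inverse> (p @ q) (p @ l # q)"
      using assms(1,3) valid_subseq by (intro conversepI wcover_delete) auto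
  qed fact
  then show ?thesis unfolding wle_def by (rule rtranclp_converseD)
qed

lemma wle_trans [trans]: "wle u v \<Longrightarrow> wle v w \<Longrightarrow> wle u w"
  unfolding wle_def by (rule rtranclp_trans)

lemma wle_valid: "wle u w \<Longrightarrow> valid_word u \<Longrightarrow> valid_word w"
  unfolding wle_def by (induct rule: rtranclp_induct) (auto simp: wcover_def)

lemma wle_subs: "wle u w \<Longrightarrow> subseq (a_subs w) (a_subs u) \<and> subseq (x_subs u) (x_subs w)"
  unfolding wle_def
proof (induct rule: rtranclp_induct)
  case (step y z)
  have "subseq (a_subs z) (a_subs y) \<and> subseq (x_subs y) (x_subs z)"
    using step(2) unfolding wcover_def
    by (auto simp: subseq_append' intro: list_emb_append_mono)
  then show ?case using step(3) by (meson subseq_order.trans)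
qed simp

definition subshuffles :: "nat list \<Rightarrow> nat list \<Rightarrow> word set" where
  "subshuffles us vs = {w. subseq (a_subs w) us \<and> subseq (x_subs w) vs}"

lemma valid_awd_xwd: "valid_word (awd i @ xwd j)"
  by (auto simp: valid_word_def awd_def xwd_def distinct_map inj_on_def simp del: upt_Suc)

lemma valid_awd: "valid_word (awd i)"
  by (rule valid_subseq[OF valid_awd_xwd[of i 0] prefix_imp_subseq]) simp

lemma valid_xwd: "valid_word (xwd j)"
  by (rule valid_subseq[OF valid_awd_xwd[of 0 j] suffix_imp_subseq]) (simp add: awd_def)

lemma interval_eq_subshuffles:
  "{w. wle (awd i) w \<and> wle w (xwd j)} = subshuffles [1..<Suc i] [1..<Suc j]"
proof (intro set_eqI iffI)
  fix w assume "w \<in> {w. wle (awd i) w \<and> wle w (xwd j)}"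
  then show "w \<in> subshuffles [1..<Suc i] [1..<Suc j]"
    using wle_subs[of "awd i" w] wle_subs[of w "xwd j"]
    by (simp add: subshuffles_def awd_def xwd_def)
next
  fix w assume "w \<in> subshuffles [1..<Suc i] [1..<Suc j]"
  then have sa: "subseq (a_subs w) [1..<Suc i]" and sx: "subseq (x_subs w) [1..<Suc j]"
    by (auto simp: subshuffles_def)
  have vw: "valid_word w"
    using valid_word_subs_mono[OF valid_awd_xwd] sa sx by (simp add: awd_def xwd_def)
  have "subseq (filter isA w) (awd i)"
    unfolding filter_isA awd_def by (rule subseq_map[OF sa])
  then have "wle (awd i) (filter isA w)"
    by (rule wle_deletions[OF valid_awd]) (auto simp: awd_def simp del: upt_Suc)
  also have "wle (filter isA w) w"
    by (rule wle_insertions[OF vw]) auto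
  finally have "wle (awd i) w" .
  have "subseq (filter (\<lambda>l. \<not> isA l) w) (xwd j)"
    unfolding filter_not_isA xwd_def by (rule subseq_map[OF sx])
  have "wle w (filter (\<lambda>l. \<not> isA l) w)"
    by (rule wle_deletions[OF vw]) auto
  also have "wle (filter (\<lambda>l. \<not> isA l) w) (xwd j)"
    by (rule wle_insertions[OF valid_xwd]) (fact, auto simp: xwd_def simp del: upt_Suc)
  finally have "wle w (xwd j)" .
  with \<open>wle (awd i) w\<close> show "w \<in> {w. wle (awd i) w \<and> wle w (xwd j)}" by simp
qed

section \<open>The convolution as a sum over subshuffles\<close>

lemma gaps_neq_Nil: "gaps P w \<noteq> []"
  by (induct w) (auto split: list.split)

lemma gaps_cong: "(\<And>x. x \<in> set xs \<Longrightarrow> P x = Q x) \<Longrightarrow> gaps P xs = gaps Q xs"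
  by (induct xs) auto

lemma gaps_no_match: "(\<And>x. x \<in> set xs \<Longrightarrow> \<not> P x) \<Longrightarrow> gaps P xs = [length xs]"
  by (induct xs) auto

lemma gaps_append_Cons:
  "(\<And>x. x \<in> set xs \<Longrightarrow> \<not> P x) \<Longrightarrow> P y
    \<Longrightarrow> gaps P (xs @ y # ys) = length xs # gaps P ys"
  by (induct xs) auto

lemma gaps_map_nth_Cons:
  assumes "inj C" "distinct us" "k < length us"
    and w: "set w \<inter> range C \<subseteq> C ` set (drop (Suc k) us)"
  shows "gaps (\<lambda>l. l \<in> set (C (us ! k) # w)) (map C us)
           = k # gaps (\<lambda>l. l \<in> set w) (map C (drop (Suc k) us))"
    and "gaps (\<lambda>l. l \<in> set (map C us)) w = gaps (\<lambda>l. l \<in> set (map C (drop (Suc k) us))) w"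
proof -
  have us: "us = take k us @ us ! k # drop (Suc k) us"
    using assms(3) by (rule id_take_nth_drop)
  then have "distinct (take k us @ us ! k # drop (Suc k) us)"
    using assms(2) by simp
  then have disj: "us ! k \<notin> set (take k us)" "us ! k \<notin> set (drop (Suc k) us)"
    "set (take k us) \<inter> set (drop (Suc k) us) = {}" by auto
  have not_in_w: "C x \<notin> set w" if "x \<in> set (take k us)" for x
    using w that disj(3) inj_image_mem_iff[OF \<open>inj C\<close>] by blast
  have "gaps (\<lambda>l. l \<in> set (C (us ! k) # w)) (map C us)
      = length (map C (take k us)) # gaps (\<lambda>l. l \<in> set (C (us ! k) # w)) (map C (drop (Suc k) us))"
    using disj not_in_w \<open>inj C\<close>
    by (subst us, subst map_append, subst list.map(2), intro gaps_append_Cons) (auto simp: inj_eq)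
  also have "gaps (\<lambda>l. l \<in> set (C (us ! k) # w)) (map C (drop (Suc k) us))
      = gaps (\<lambda>l. l \<in> set w) (map C (drop (Suc k) us))"
    using disj \<open>inj C\<close> by (intro gaps_cong) (auto simp: inj_eq)
  finally show "gaps (\<lambda>l. l \<in> set (C (us ! k) # w)) (map C us)
           = k # gaps (\<lambda>l. l \<in> set w) (map C (drop (Suc k) us))"
    using assms(3) by simp
  show "gaps (\<lambda>l. l \<in> set (map C us)) w = gaps (\<lambda>l. l \<in> set (map C (drop (Suc k) us))) w"
    using w set_drop_subset[of "Suc k" us] by (intro gaps_cong) auto
qed

fun inc_hd :: "nat \<Rightarrow> nat list \<Rightarrow> nat list" where
  "inc_hd d [] = []"
| "inc_hd d (n # ns) = (n + d) # ns"

lemma inc_hd_0 [simp]: "inc_hd 0 ns = ns"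
  by (cases ns) auto

lemma inc_hd_gaps_Cons: "\<not> P l \<Longrightarrow> inc_hd d (gaps P (l # w)) = inc_hd (Suc d) (gaps P w)"
  using gaps_neq_Nil[of P w] by (cases "gaps P w") auto

text \<open>With d = c = 0 these are f(map A us, w) and g(w, map X vs) for multiplicative f and g.
  The offset enlarges the first gap of w, as if w were preceded by d letters of the x-alphabet
  (resp. c letters of the a-alphabet).\<close>

definition f_weight ::
    "(nat \<Rightarrow> nat \<Rightarrow> 'a::comm_monoid_mult) \<Rightarrow> nat \<Rightarrow> nat list \<Rightarrow> word \<Rightarrow> 'a" where
  "f_weight ff d us w = prod_list (map (\<lambda>(i, j). ff i j)
     (zip (gaps (\<lambda>l. l \<in> set w) (map A us)) (inc_hd d (gaps (\<lambda>l. l \<in> set (map A us)) w))))"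

definition g_weight ::
    "(nat \<Rightarrow> nat \<Rightarrow> 'a::comm_monoid_mult) \<Rightarrow> nat \<Rightarrow> word \<Rightarrow> nat list \<Rightarrow> 'a" where
  "g_weight gg c w vs = prod_list (map (\<lambda>(i, j). gg i j)
     (zip (inc_hd c (gaps (\<lambda>l. l \<in> set (map X vs)) w)) (gaps (\<lambda>l. l \<in> set w) (map X vs))))"

lemma f_weight_Nil: "f_weight ff d us [] = ff (length us) d"
  unfolding f_weight_def by (subst gaps_no_match) auto

lemma g_weight_Nil: "g_weight gg c [] vs = gg c (length vs)"
  unfolding g_weight_def by (subst gaps_no_match) auto

lemma f_weight_X_Cons: "f_weight ff d us (X j # w) = f_weight ff (Suc d) us w"
proof -
  have "gaps (\<lambda>l. l \<in> set (X j # w)) (map A us) = gaps (\<lambda>l. l \<in> set w) (map A us)"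
    by (rule gaps_cong) auto
  moreover have "inc_hd d (gaps (\<lambda>l. l \<in> set (map A us)) (X j # w))
      = inc_hd (Suc d) (gaps (\<lambda>l. l \<in> set (map A us)) w)"
    by (rule inc_hd_gaps_Cons) auto
  ultimately show ?thesis unfolding f_weight_def by simp
qed

lemma g_weight_A_Cons: "g_weight gg c (A i # w) vs = g_weight gg (Suc c) w vs"
proof -
  have "gaps (\<lambda>l. l \<in> set (A i # w)) (map X vs) = gaps (\<lambda>l. l \<in> set w) (map X vs)"
    by (rule gaps_cong) auto
  moreover have "inc_hd c (gaps (\<lambda>l. l \<in> set (map X vs)) (A i # w))
      = inc_hd (Suc c) (gaps (\<lambda>l. l \<in> set (map X vs)) w)"
    by (rule inc_hd_gaps_Cons) auto
  ultimately show ?thesis unfolding g_weight_def by simp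
qed

lemma f_weight_A_Cons:
  assumes "distinct us" "k < length us" "w \<in> subshuffles (drop (Suc k) us) vs"
  shows "f_weight ff d us (A (us ! k) # w) = ff k d * f_weight ff 0 (drop (Suc k) us) w"
proof -
  have inj: "inj A" by (simp add: inj_def)
  have "set w \<inter> range A \<subseteq> A ` set (drop (Suc k) us)"
    using assms(3) subseq_set[of "a_subs w" "drop (Suc k) us"]
    by (auto simp: subshuffles_def A_in_set_iff)
  note gaps = gaps_map_nth_Cons[OF inj assms(1,2) this]
  have hd: "gaps (\<lambda>l. l \<in> set (map A us)) (A (us ! k) # w)
      = 0 # gaps (\<lambda>l. l \<in> set (map A us)) w"
    using assms(2) by simp
  show ?thesis
    unfolding f_weight_def gaps hd by simp
qed

lemma g_weight_X_Cons:
  assumes "distinct vs" "k < length vs" "w \<in> subshuffles us (drop (Suc k) vs)"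
  shows "g_weight gg c (X (vs ! k) # w) vs = gg c k * g_weight gg 0 w (drop (Suc k) vs)"
proof -
  have inj: "inj X" by (simp add: inj_def)
  have "set w \<inter> range X \<subseteq> X ` set (drop (Suc k) vs)"
    using assms(3) subseq_set[of "x_subs w" "drop (Suc k) vs"]
    by (auto simp: subshuffles_def X_in_set_iff)
  note gaps = gaps_map_nth_Cons[OF inj assms(1,2) this]
  have hd: "gaps (\<lambda>l. l \<in> set (map X vs)) (X (vs ! k) # w)
      = 0 # gaps (\<lambda>l. l \<in> set (map X vs)) w"
    using assms(2) by simp
  show ?thesis
    unfolding g_weight_def gaps hd by simp
qed

lemma subseq_Cons_iff_nth:
  "subseq (x # xs) ys \<longleftrightarrow> (\<exists>k<length ys. ys ! k = x \<and> subseq xs (drop (Suc k) ys))"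
proof
  assume "subseq (x # xs) ys"
  then obtain us vs where "ys = us @ x # vs" "subseq xs vs"
    by (auto dest: list_emb_ConsD)
  then show "\<exists>k<length ys. ys ! k = x \<and> subseq xs (drop (Suc k) ys)"
    by (intro exI[of _ "length us"]) auto
next
  assume "\<exists>k<length ys. ys ! k = x \<and> subseq xs (drop (Suc k) ys)"
  then obtain k where k: "k < length ys" "ys ! k = x" "subseq xs (drop (Suc k) ys)" by blast
  then have "subseq (x # xs) (take k ys @ ys ! k # drop (Suc k) ys)" by auto
  then show "subseq (x # xs) ys" using id_take_nth_drop[OF k(1)] by simp
qed

lemma subshuffles_decomp:
  "subshuffles us vs = insert []
     ((\<Union>k<length us. Cons (A (us ! k)) ` subshuffles (drop (Suc k) us) vs) \<union>
      (\<Union>k<length vs. Cons (X (vs ! k)) ` subshuffles us (drop (Suc k) vs)))"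
proof (rule set_eqI)
  fix w show "w \<in> subshuffles us vs \<longleftrightarrow> w \<in> insert []
     ((\<Union>k<length us. Cons (A (us ! k)) ` subshuffles (drop (Suc k) us) vs) \<union>
      (\<Union>k<length vs. Cons (X (vs ! k)) ` subshuffles us (drop (Suc k) vs)))"
  proof (cases w)
    case (Cons l w')
    then show ?thesis
      by (cases l) (auto simp: subshuffles_def subseq_Cons_iff_nth)
  qed (simp add: subshuffles_def)
qed

lemma finite_subshuffles: "finite (subshuffles us vs)"
proof (induction "length us + length vs" arbitrary: us vs rule: less_induct)
  case less
  then show ?case by (subst subshuffles_decomp) auto
qed

lemma sum_UN_Cons:
  assumes "inj_on h I" "finite I" "\<And>k. k \<in> I \<Longrightarrow> finite (W k)"
  shows "sum F (\<Union>k\<in>I. Cons (h k) ` W k) = (\<Sum>k\<in>I. \<Sum>w\<in>W k. F (h k # w))"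
proof -
  have "sum F (\<Union>k\<in>I. Cons (h k) ` W k) = (\<Sum>k\<in>I. sum F (Cons (h k) ` W k))"
    using assms by (intro sum.UNION_disjoint) (auto dest: inj_onD)
  also have "\<dots> = (\<Sum>k\<in>I. \<Sum>w\<in>W k. F (h k # w))"
    by (simp add: sum.reindex)
  finally show ?thesis .
qed

lemma sum_subshuffles:
  assumes "distinct us" "distinct vs"
  shows "(\<Sum>w\<in>subshuffles us vs. F w) = F []
     + (\<Sum>k<length us. \<Sum>w\<in>subshuffles (drop (Suc k) us) vs. F (A (us ! k) # w))
     + (\<Sum>k<length vs. \<Sum>w\<in>subshuffles us (drop (Suc k) vs). F (X (vs ! k) # w))"
proof -
  let ?UA = "\<Union>k<length us. Cons (A (us ! k)) ` subshuffles (drop (Suc k) us) vs"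
  let ?UX = "\<Union>k<length vs. Cons (X (vs ! k)) ` subshuffles us (drop (Suc k) vs)"
  have "finite ?UA" "finite ?UX" by (simp_all add: finite_subshuffles)
  moreover have "?UA \<inter> ?UX = {}" "[] \<notin> ?UA \<union> ?UX" by auto
  moreover have "inj_on (\<lambda>k. A (us ! k)) {..<length us}" "inj_on (\<lambda>k. X (vs ! k)) {..<length vs}"
    using assms by (auto simp: inj_on_def nth_eq_iff_index_eq)
  ultimately show ?thesis
    by (subst subshuffles_decomp) (simp add: sum.union_disjoint sum_UN_Cons finite_subshuffles add.assoc)
qed

definition shuffle_sum :: "(nat \<Rightarrow> nat \<Rightarrow> 'a::comm_semiring_1) \<Rightarrow> (nat \<Rightarrow> nat \<Rightarrow> 'a)
    \<Rightarrow> nat \<Rightarrow> nat \<Rightarrow> nat list \<Rightarrow> nat list \<Rightarrow> 'a" where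
  "shuffle_sum ff gg c d us vs = (\<Sum>w\<in>subshuffles us vs. f_weight ff d us w * g_weight gg c w vs)"

lemma shuffle_sum_rec:
  assumes "distinct us" "distinct vs"
  shows "shuffle_sum ff gg c d us vs = ff (length us) d * gg c (length vs)
     + (\<Sum>k<length us. ff k d * shuffle_sum ff gg (Suc c) 0 (drop (Suc k) us) vs)
     + (\<Sum>k<length vs. gg c k * shuffle_sum ff gg 0 (Suc d) us (drop (Suc k) vs))"
proof -
  have "(\<Sum>w\<in>subshuffles (drop (Suc k) us) vs.
          f_weight ff d us (A (us ! k) # w) * g_weight gg c (A (us ! k) # w) vs)
      = ff k d * shuffle_sum ff gg (Suc c) 0 (drop (Suc k) us) vs" if "k < length us" for k
    using assms(1) that
    by (simp add: shuffle_sum_def sum_distrib_left f_weight_A_Cons g_weight_A_Cons mult.assoc)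
  moreover have "(\<Sum>w\<in>subshuffles us (drop (Suc k) vs).
          f_weight ff d us (X (vs ! k) # w) * g_weight gg c (X (vs ! k) # w) vs)
      = gg c k * shuffle_sum ff gg 0 (Suc d) us (drop (Suc k) vs)" if "k < length vs" for k
    using assms(2) that
    by (simp add: shuffle_sum_def sum_distrib_left f_weight_X_Cons g_weight_X_Cons mult_ac)
  ultimately show ?thesis
    unfolding shuffle_sum_def[of ff gg c d] sum_subshuffles[OF assms]
    by (simp add: f_weight_Nil g_weight_Nil)
qed

lemma conv_eq_shuffle_sum:
  assumes "multiplicative f" "multiplicative g"
  shows "fval (conv f g) i j = shuffle_sum (fval f) (fval g) 0 0 [1..<Suc i] [1..<Suc j]"
proof -
  have "f (awd i) w * g w (xwd j)
      = f_weight (fval f) 0 [1..<Suc i] w * g_weight (fval g) 0 w [1..<Suc j]"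
    if "wle (awd i) w" "wle w (xwd j)" for w
  proof -
    have "valid_word w" using wle_valid[OF that(1) valid_awd] .
    then show ?thesis
      using assms that valid_awd valid_xwd
      unfolding multiplicative_def f_weight_def g_weight_def ctype_def awd_def xwd_def
      by (simp del: upt_Suc)
  qed
  then show ?thesis
    unfolding fval_def[of "conv f g"] conv_def shuffle_sum_def interval_eq_subshuffles[symmetric]
    by (intro sum.cong) auto
qed

section \<open>Generating series\<close>

definition shuffle_system :: "(nat \<Rightarrow> nat \<Rightarrow> 'a::comm_ring_1) \<Rightarrow> (nat \<Rightarrow> nat \<Rightarrow> 'a)
    \<Rightarrow> (nat \<Rightarrow> 'a fps fps) \<Rightarrow> (nat \<Rightarrow> 'a fps fps) \<Rightarrow> bool" where
  "shuffle_system ff gg L K \<longleftrightarrow>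
     (\<forall>c. L c = fps_const (gen_series ff $ 0) * row_series gg c
        + fps_const (fps_X * gen_series ff $ 0) * L (Suc c) + fps_X * row_series gg c * K 1) \<and>
     (\<forall>d. K d = fps_const (gen_series ff $ d) * row_series gg 0
        + fps_const (fps_X * gen_series ff $ d) * L 1 + fps_X * row_series gg 0 * K (Suc d))"

lemma shuffle_sum_eq_coeff:
  assumes sys: "shuffle_system ff gg L K" and "distinct us" "distinct vs"
  shows "shuffle_sum ff gg c 0 us vs = L c $ length vs $ length us
       \<and> shuffle_sum ff gg 0 d us vs = K d $ length vs $ length us"
  using assms(2,3)
proof (induction "length us + length vs" arbitrary: c d us vs rule: less_induct)
  case less
  note L_eq = conjunct1[OF sys[unfolded shuffle_system_def], rule_format]
  note K_eq = conjunct2[OF sys[unfolded shuffle_system_def], rule_format]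
  have IH_A: "shuffle_sum ff gg (Suc c') 0 (drop (Suc k) us) vs
      = L (Suc c') $ length vs $ (length us - Suc k)" if "k < length us" for c' k
    using less.hyps[of "drop (Suc k) us" vs] less.prems that by auto
  have IH_X: "shuffle_sum ff gg 0 (Suc d') us (drop (Suc k) vs)
      = K (Suc d') $ (length vs - Suc k) $ length us" if "k < length vs" for d' k
    using less.hyps[of us "drop (Suc k) vs"] less.prems that by auto
  have "L c $ length vs $ length us = ff (length us) 0 * gg c (length vs)
      + (\<Sum>k<length us. ff k 0 * L (Suc c) $ length vs $ (length us - Suc k))
      + (\<Sum>k<length vs. gg c k * K 1 $ (length vs - Suc k) $ length us)"
    by (subst L_eq[of c]) (simp only: fps_add_nth row_series_mult_nth x_mult_nth y_mult_nth gen_series_nth)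
  moreover have "K d $ length vs $ length us = ff (length us) d * gg 0 (length vs)
      + (\<Sum>k<length us. ff k d * L 1 $ length vs $ (length us - Suc k))
      + (\<Sum>k<length vs. gg 0 k * K (Suc d) $ (length vs - Suc k) $ length us)"
    by (subst K_eq[of d]) (simp only: fps_add_nth row_series_mult_nth x_mult_nth y_mult_nth gen_series_nth)
  ultimately show ?case
    using shuffle_sum_rec[OF less.prems, of ff gg c 0] shuffle_sum_rec[OF less.prems, of ff gg 0 d]
    by (simp add: IH_A IH_X)
qed

lemma fixpoint_identities:
  fixes l r s P Q x y :: "'a::comm_ring_1"
  assumes l: "l * (1 - x * y * s * r) = (P + y * Q * s) * r"
  shows "(P + y * (Q + x * l) * s) * r = l"
    and "(P + y * (Q + x * l) * s) * (Q + x * P * r) * (1 - x * y * s * r)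
         = (Q + x * P * r) * (P + y * Q * s)"
proof -
  have "(P + y * (Q + x * l) * s) * r = l * (1 - x * y * s * r) + x * y * s * r * l"
    unfolding l by (simp add: algebra_simps)
  then show "(P + y * (Q + x * l) * s) * r = l"
    by (simp add: algebra_simps)
  have "(P + y * (Q + x * l) * s) * (Q + x * P * r) * (1 - x * y * s * r)
      = ((P + y * Q * s) * (1 - x * y * s * r) + x * y * s * (l * (1 - x * y * s * r)))
          * (Q + x * P * r)"
    by (simp add: algebra_simps)
  also have "\<dots> = (Q + x * P * r) * (P + y * Q * s)"
    unfolding l by (simp add: algebra_simps)
  finally show "(P + y * (Q + x * l) * s) * (Q + x * P * r) * (1 - x * y * s * r)
      = (Q + x * P * r) * (P + y * Q * s)" .
qed

lemma shuffle_system_solvable: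
  fixes ff gg :: "nat \<Rightarrow> nat \<Rightarrow> 'a::comm_ring_1"
  defines "F \<equiv> gen_series ff"
  defines "R \<equiv> tail_subst_x gg (F $ 0)" and "S \<equiv> tail_subst_y F (row_series gg 0)"
  obtains L K where "shuffle_system ff gg L K"
    and "L 0 * (1 - fps_const fps_X * fps_X * S 1 * R 1) = R 0 * S 0"
proof -
  define x :: "'a fps fps" where "x = fps_const fps_X"
  define y :: "'a fps fps" where "y = fps_X"
  define P where "P d = fps_const (F $ d)" for d
  define Q where "Q c = row_series gg c" for c
  define D where "D = 1 - x * y * S 1 * R 1"
  have x_P: "fps_const (fps_X * F $ d) = x * P d" for d
    by (simp add: x_def P_def)
  have R_rec: "R c = Q c + x * P 0 * R (Suc c)" for c
    unfolding R_def by (subst tail_subst_x_rec) (simp add: Q_def x_P)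
  have S_rec: "S d = P d + y * Q 0 * S (Suc d)" for d
    unfolding S_def P_def Q_def y_def by (rule tail_subst_y_rec)
  have "D $ 0 $ 0 = 1" by (simp add: D_def y_def)
  define l where "l = (P 0 + y * Q 0 * S 1) * R 1 * inv2 D"
  have "l * D = (P 0 + y * Q 0 * S 1) * R 1 * (D * inv2 D)"
    by (simp add: l_def mult_ac)
  then have "l * D = (P 0 + y * Q 0 * S 1) * R 1"
    using inv2_right_inverse[OF \<open>D $ 0 $ 0 = 1\<close>] by simp
  note fixpoint = fixpoint_identities[OF this[unfolded D_def]]
  (* The ansatz L c = (F_0 + y K_1) R_c, K d = (G_0 + x L_1) S_d turns the system into the
     single linear equation L_1 D = (F_0 + y G_0 S_1) R_1. *)
  define L where "L c = (P 0 + y * (Q 0 + x * l) * S 1) * R c" for c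
  define K where "K d = (Q 0 + x * l) * S d" for d
  have L_1: "L 1 = l"
    unfolding L_def by (rule fixpoint(1))
  have "shuffle_system ff gg L K"
    unfolding shuffle_system_def F_def[symmetric] x_P
  proof (intro conjI allI)
    fix c
    show "L c = fps_const (F $ 0) * row_series gg c + x * P 0 * L (Suc c)
        + fps_X * row_series gg c * K 1"
      unfolding L_def K_def by (subst R_rec) (simp add: P_def Q_def y_def algebra_simps)
  next
    fix d
    show "K d = fps_const (F $ d) * row_series gg 0 + x * P d * L 1
        + fps_X * row_series gg 0 * K (Suc d)"
      unfolding L_1 K_def by (subst S_rec) (simp add: P_def Q_def y_def algebra_simps)
  qed
  moreover have "L 0 * D = R 0 * S 0"
    using fixpoint(2) R_rec[of 0] S_rec[of 0] by (simp add: L_def D_def)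
  ultimately show ?thesis using that unfolding D_def x_def y_def by blast
qed

lemma inv2_shuffle_sum_series:
  fixes ff gg :: "nat \<Rightarrow> nat \<Rightarrow> 'a::comm_ring_1"
  assumes "ff 0 0 = 1" "gg 0 0 = 1"
  defines "F \<equiv> gen_series ff" and "G \<equiv> gen_series gg"
  shows "inv2 (gen_series (\<lambda>i j. shuffle_sum ff gg 0 0 [1..<Suc i] [1..<Suc j]))
       = inv2 (subst_y F (at_x0 G) * at_x0 G) + inv2 (at_y0 F * subst_x G (F $ 0))
         - inv2 (at_y0 F * at_x0 G)"
proof -
  define R where "R = tail_subst_x gg (F $ 0)"
  define S where "S = tail_subst_y F (row_series gg 0)"
  define D :: "'a fps fps" where "D = 1 - fps_const fps_X * fps_X * S 1 * R 1"
  obtain L K where sys: "shuffle_system ff gg L K" and L_D: "L 0 * D = R 0 * S 0"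
    using shuffle_system_solvable[of ff gg] unfolding R_def S_def D_def F_def by blast
  have coeffs: "gen_series (\<lambda>i j. shuffle_sum ff gg 0 0 [1..<Suc i] [1..<Suc j]) = L 0"
    using shuffle_sum_eq_coeff[OF sys] by (intro fps_ext) (simp del: upt_Suc)
  have substs: "R 0 = subst_x G (F $ 0)" "S 0 = subst_y F (at_x0 G)"
    "at_y0 F = fps_const (F $ 0)" "at_x0 G = row_series gg 0"
    by (simp_all add: R_def S_def G_def tail_subst_x_def tail_subst_y_def at_y0_def at_x0_gen_series)
  have units: "R 0 $ 0 $ 0 = 1" "S 0 $ 0 $ 0 = 1"
    "fps_const (F $ 0) $ 0 $ 0 = 1" "row_series gg 0 $ 0 $ 0 = 1"
    using assms(1,2)
    by (simp_all add: R_def S_def F_def tail_subst_x_def tail_subst_y_def subst_x_def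
        subst_y_def row_series_def)
  have "R 0 * fps_const (F $ 0) + S 0 * row_series gg 0 - R 0 * S 0
      = fps_const (F $ 0) * row_series gg 0 * D"
    unfolding R_def S_def D_def tail_subst_x_rec[of gg _ 0] tail_subst_y_rec[of F _ 0]
      fps_const_mult[symmetric]
    by (simp add: algebra_simps del: fps_const_mult)
  with units L_D have "inv2 (L 0) = inv2 (S 0 * row_series gg 0) + inv2 (fps_const (F $ 0) * R 0)
      - inv2 (fps_const (F $ 0) * row_series gg 0)"
    by (intro inv2_partial_fractions)
  then show ?thesis unfolding coeffs substs .
qed

theorem theorem5p2:
  fixes f g :: "word \<Rightarrow> word \<Rightarrow> 'a::comm_ring_1"
  assumes rat: "\<And>n::nat. n > 0 \<Longrightarrow> \<exists>r::'a. of_nat n * r = 1"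
    and mf: "multiplicative f" and mg: "multiplicative g"
  defines "F \<equiv> gen_series (fval f)"
    and "G \<equiv> gen_series (fval g)"
    and "FG \<equiv> gen_series (fval (conv f g))"
  defines "F0 \<equiv> at_y0 F" and "G0 \<equiv> at_x0 G"
  defines "Ft \<equiv> subst_y F G0" and "Gt \<equiv> subst_x G (fps_nth F 0)"
  shows "inv2 FG = inv2 (Ft * G0) + inv2 (F0 * Gt) - inv2 (F0 * G0)"
proof -
  have "fval f 0 0 = 1" "fval g 0 0 = 1"
    using mf mg by (simp_all add: multiplicative_def)
  note series_identity = inv2_shuffle_sum_series[of "fval f" "fval g", OF this]
  have conv: "fval (conv f g) = (\<lambda>i j. shuffle_sum (fval f) (fval g) 0 0 [1..<Suc i] [1..<Suc j])"
    using conv_eq_shuffle_sum[OF mf mg] by (intro ext)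
  show ?thesis
    unfolding FG_def conv Ft_def Gt_def F0_def G0_def F_def G_def by (rule series_identity)
qed

end
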